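(* Let $\{(\mathbf{x}^k,\mathbf{y}^k,\boldsymbol{\gamma}^k)\}$ be generated by the two-block linearized ADMM below, applied under the standing assumptions (i)–(iv) below, with parameters satisfying $$L_x\ge L_g+\beta L_{\mathbf{A}}+6L_w^2+1,\quad L_y\ge L_w+L_w^2+3,\quad C_m=\tfrac{L_y+L_w^2}{2},\quad \beta\ge\max\left\{\frac{L_w+L_y+2}{\lambda_{\mathbf{B}^{\rm T}\mathbf{B}}},\frac{3(L_w^2+L_y^2)}{\lambda_{\mathbf{B}^{\rm T}\mathbf{B}}C_m},\frac{3L_y^2}{\lambda_{\mathbf{B}^{\rm T}\mathbf{B}}}\right\},$$ where $L_{\mathbf{A}}$ is the largest eigenvalue of $\mathbf{A}^{\rm T}\mathbf{A}$, $\lambda_{\mathbf{B}^{\rm T}\mathbf{B}}$ the smallest eigenvalue of $\mathbf{B}^{\rm T}\mathbf{B}$, and $L_w=L_g+L_h$. Define, for $k\ge1$, $$m_k=L_\beta(\mathbf{x}^k,\mathbf{y}^k,\boldsymbol{\gamma}^k)+C_m\|\mathbf{y}^k-\mathbf{y}^{k-1}\|^2.$$ Then the sequence $\{m_k\}$ is convergent.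
   Context: Problem: minimize $g(\mathbf{x},\mathbf{y})+f(\mathbf{x})+h(\mathbf{y})$ s.t. $\mathbf{A}\mathbf{x}+\mathbf{B}\mathbf{y}=\mathbf{0}$, $\mathbf{x}\in\mathbb{R}^p$, $\mathbf{y}\in\mathbb{R}^q$, $\mathbf{A}\in\mathbb{R}^{n\times p}$, $\mathbf{B}\in\mathbb{R}^{n\times q}$; $f$ possibly nonconvex nonsmooth. Standing assumptions: (i) $\nabla h$ is $L_h$-Lipschitz; (ii) $\nabla g$ is $L_g$-Lipschitz; (iii) $g+f+h$ is lower bounded on the feasible set $\{(\mathbf{x},\mathbf{y}):\mathbf{A}\mathbf{x}+\mathbf{B}\mathbf{y}=\mathbf{0}\}$ and coercive w.r.t. $\mathbf{y}$ over it (objective $\to+\infty$ along any feasible sequence with $\|\mathbf{y}^k\|\to\infty$); (iv) $\mathbf{B}$ has full column rank and $\mathrm{Im}(\mathbf{A})\subset\mathrm{Im}(\mathbf{B})$. $L_\beta(\mathbf{x},\mathbf{y},\boldsymbol{\gamma})=g(\mathbf{x},\mathbf{y})+f(\mathbf{x})+h(\mathbf{y})+\langle\boldsymbol{\gamma},\mathbf{A}\mathbf{x}+\mathbf{B}\mathbf{y}\rangle+\frac{\beta}{2}\|\mathbf{A}\mathbf{x}+\mathbf{B}\mathbf{y}\|^2$. Algorithm (parameters $L_x,L_y,\beta>0$, arbitrary initialization): $\mathbf{x}^{k+1}\in\arg\min\bar f^k$, $\mathbf{y}^{k+1}=\arg\min\bar h^k$, $\boldsymbol{\gamma}^{k+1}=\boldsymbol{\gamma}^k+\beta(\mathbf{A}\mathbf{x}^{k+1}+\mathbf{B}\mathbf{y}^{k+1})$,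 where $\bar f^k(\mathbf{x})=f(\mathbf{x})+\langle\boldsymbol{\gamma}^k,\mathbf{A}\mathbf{x}\rangle+\frac{L_x}{2}\|\mathbf{x}-\mathbf{x}^k\|^2+\langle\mathbf{x}-\mathbf{x}^k,\nabla_{\mathbf{x}}g(\mathbf{x}^k,\mathbf{y}^k)+\beta\mathbf{A}^{\rm T}(\mathbf{A}\mathbf{x}^k+\mathbf{B}\mathbf{y}^k)\rangle$, $\bar h^k(\mathbf{y})=\langle\boldsymbol{\gamma}^k,\mathbf{B}\mathbf{y}\rangle+\frac{L_y}{2}\|\mathbf{y}-\mathbf{y}^k\|^2+\frac{\beta}{2}\|\mathbf{A}\mathbf{x}^{k+1}+\mathbf{B}\mathbf{y}\|^2+\langle\mathbf{y}-\mathbf{y}^k,\nabla_{\mathbf{y}}g(\mathbf{x}^{k+1},\mathbf{y}^k)+\nabla h(\mathbf{y}^k)\rangle$ (minimizers of $\bar f^k$ assumed to exist). *)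

theory Defs
  imports "HOL-Analysis.Analysis"
begin

definition is_eigenvalue :: "real^'n^'n \<Rightarrow> real \<Rightarrow> bool" where
  "is_eigenvalue M l \<longleftrightarrow> (\<exists>v. v \<noteq> 0 \<and> M *v v = l *\<^sub>R v)"

definition aug_lagr ::
  "(real^'p \<Rightarrow> real^'q \<Rightarrow> real) \<Rightarrow> (real^'p \<Rightarrow> real) \<Rightarrow> (real^'q \<Rightarrow> real)
   \<Rightarrow> real^'p^'n \<Rightarrow> real^'q^'n \<Rightarrow> real \<Rightarrow> real^'p \<Rightarrow> real^'q \<Rightarrow> real^'n \<Rightarrow> real" where
  "aug_lagr g f h A B \<beta> x y \<gamma> =
     g x y + f x + h y + \<gamma> \<bullet> (A *v x + B *v y) + \<beta> / 2 * (norm (A *v x + B *v y))\<^sup>2"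

text \<open>Surrogate for the x-update (\<open>\<bar>f\<^sup>k\<close>), with \<open>gx\<close> the partial gradient of g in x.\<close>
definition fbar ::
  "(real^'p \<Rightarrow> real) \<Rightarrow> (real^'p \<Rightarrow> real^'q \<Rightarrow> real^'p) \<Rightarrow> real^'p^'n \<Rightarrow> real^'q^'n
   \<Rightarrow> real \<Rightarrow> real \<Rightarrow> real^'p \<Rightarrow> real^'q \<Rightarrow> real^'n \<Rightarrow> real^'p \<Rightarrow> real" where
  "fbar f gx A B \<beta> Lx xk yk \<gamma>k x =
     f x + \<gamma>k \<bullet> (A *v x) + Lx / 2 * (norm (x - xk))\<^sup>2
     + (x - xk) \<bullet> (gx xk yk + \<beta> *\<^sub>R (transpose A *v (A *v xk + B *v yk)))"

text \<open>Surrogate for the y-update (\<open>\<bar>h\<^sup>k\<close>); \<open>xk1\<close> is \<open>x\<^sup>k\<^sup>+\<^sup>1\<close>, \<open>gy\<close> the partial gradient of g in y,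
  \<open>gh\<close> the gradient of h.\<close>
definition hbar ::
  "(real^'p \<Rightarrow> real^'q \<Rightarrow> real^'q) \<Rightarrow> (real^'q \<Rightarrow> real^'q) \<Rightarrow> real^'p^'n \<Rightarrow> real^'q^'n
   \<Rightarrow> real \<Rightarrow> real \<Rightarrow> real^'p \<Rightarrow> real^'q \<Rightarrow> real^'n \<Rightarrow> real^'q \<Rightarrow> real" where
  "hbar gy gh A B \<beta> Ly xk1 yk \<gamma>k y =
     \<gamma>k \<bullet> (B *v y) + Ly / 2 * (norm (y - yk))\<^sup>2 + \<beta> / 2 * (norm (A *v xk1 + B *v y))\<^sup>2
     + (y - yk) \<bullet> (gy xk1 yk + gh yk)"

end

theory Submission
  imports Defs
begin

text \<open>
  The merit function \<open>m\<^sub>k\<close> is nonincreasing and bounded below, hence convergent.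
  Each primal step decreases the augmented Lagrangian by a multiple of the squared step length
  (descent lemma plus the strong convexity of the surrogates), while the dual step increases it
  by \<open>\<beta> \<parallel>Ax + By\<parallel>\<^sup>2 = \<parallel>\<gamma>\<^sup>k\<^sup>+\<^sup>1 - \<gamma>\<^sup>k\<parallel>\<^sup>2 / \<beta>\<close>.  The optimality condition of the y-update expresses
  \<open>B\<^sup>T \<gamma>\<^sup>k\<^sup>+\<^sup>1\<close> through primal quantities, and since the dual increments lie in the range of \<open>B\<close>, the
  smallest eigenvalue of \<open>B\<^sup>T B\<close> turns this into a bound on the dual increment by the last two
  primal steps, which the term \<open>C\<^sub>m \<parallel>y\<^sup>k - y\<^sup>k\<^sup>-\<^sup>1\<parallel>\<^sup>2\<close> absorbs.  For the lower bound, the same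
  optimality condition and the descent lemma compare \<open>m\<^sub>k\<close> with the objective at a feasible point.
\<close>

lemma power2_norm_add:
  fixes a b :: "'a::real_inner"
  shows "(norm (a + b))\<^sup>2 = (norm a)\<^sup>2 + 2 * (a \<bullet> b) + (norm b)\<^sup>2"
  unfolding power2_norm_eq_inner by (simp add: inner_add_left inner_add_right inner_commute[of b a])

lemma norm_add3_power2_le:
  fixes a b c :: "'a::real_normed_vector"
  shows "(norm (a + b + c))\<^sup>2 \<le> 3 * ((norm a)\<^sup>2 + (norm b)\<^sup>2 + (norm c)\<^sup>2)"
proof -
  have "norm (a + b + c) \<le> norm a + norm b + norm c"
    by (metis add_right_mono norm_triangle_ineq order_trans)
  then have "(norm (a + b + c))\<^sup>2 \<le> (norm a + norm b + norm c)\<^sup>2" by (simp add: power_mono)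
  moreover have "3 * ((norm a)\<^sup>2 + (norm b)\<^sup>2 + (norm c)\<^sup>2) - (norm a + norm b + norm c)\<^sup>2
     = (norm a - norm b)\<^sup>2 + (norm b - norm c)\<^sup>2 + (norm a - norm c)\<^sup>2"
    by (simp add: power2_eq_square algebra_simps)
  moreover have "0 \<le> (norm a - norm b)\<^sup>2 + (norm b - norm c)\<^sup>2 + (norm a - norm c)\<^sup>2" by simp
  ultimately show ?thesis by linarith
qed

lemma binary_quadratic_nonneg:
  fixes p m q \<nu> \<delta> :: real
  assumes "p > 0" "m\<^sup>2 \<le> p * q"
  shows "0 \<le> p * \<nu>\<^sup>2 - 2 * m * \<delta> * \<nu> + q * \<delta>\<^sup>2"
proof -
  have "p * (p * \<nu>\<^sup>2 - 2 * m * \<delta> * \<nu> + q * \<delta>\<^sup>2) = (p * \<nu> - m * \<delta>)\<^sup>2 + (p * q - m\<^sup>2) * \<delta>\<^sup>2"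
    by (simp add: power2_eq_square algebra_simps)
  also have "\<dots> \<ge> 0" using assms by simp
  finally show ?thesis using assms(1) by (simp add: zero_le_mult_iff)
qed

lemma linear_coeff_zero_if_quadratic_nonneg:
  fixes b c :: real
  assumes nonneg: "\<And>t. 0 \<le> 2 * t * b + t\<^sup>2 * c"
  shows "b = 0"
proof -
  define s where "s = 1 / (\<bar>c\<bar> + 1)"
  have s: "0 < s" "s * \<bar>c\<bar> \<le> 1" by (simp_all add: s_def field_simps)
  have "0 \<le> 2 * (- s * b) * b + (- s * b)\<^sup>2 * c" by (rule nonneg)
  then have "2 * s * b\<^sup>2 \<le> s * b\<^sup>2 * (s * c)" by (simp add: power2_eq_square algebra_simps)
  also have "\<dots> \<le> s * b\<^sup>2 * 1"
    using s by (intro mult_left_mono) (auto intro: order_trans[OF mult_left_mono[OF abs_ge_self]])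
  finally show ?thesis using s(1) by simp
qed

lemma lipschitz_gradient_upper_bound:
  fixes F :: "'a::real_inner \<Rightarrow> real" and G :: "'a \<Rightarrow> 'a"
  assumes der: "\<And>z. (F has_derivative (\<lambda>d. G z \<bullet> d)) (at z)"
    and lip: "\<And>z w. norm (G z - G w) \<le> L * norm (z - w)"
  shows "F y \<le> F x + G x \<bullet> (y - x) + L/2 * (norm (y - x))\<^sup>2"
proof -
  define d where "d = y - x"
  define \<phi> where "\<phi> t = t * (G x \<bullet> d) + L/2 * t\<^sup>2 * (norm d)\<^sup>2 - F (x + t *\<^sub>R d)" for t
  have dF: "((\<lambda>t. F (x + t *\<^sub>R d)) has_real_derivative (G (x + t *\<^sub>R d) \<bullet> d)) (at t)" for t
  proof -
    have "((F \<circ> (\<lambda>t. x + t *\<^sub>R d)) has_derivative ((\<lambda>e. G (x + t *\<^sub>R d) \<bullet> e) \<circ> (\<lambda>s. s *\<^sub>R d))) (at t)"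
      by (rule diff_chain_at[OF _ der]) (auto intro!: derivative_eq_intros)
    moreover have "(\<lambda>e. G (x + t *\<^sub>R d) \<bullet> e) \<circ> (\<lambda>s. s *\<^sub>R d) = (\<lambda>s. (G (x + t *\<^sub>R d) \<bullet> d) * s)"
      by (auto simp: fun_eq_iff)
    ultimately show ?thesis by (simp add: has_field_derivative_def o_def)
  qed
  have slope: "(G (x + t *\<^sub>R d) - G x) \<bullet> d \<le> L * t * (norm d)\<^sup>2" if "0 \<le> t" for t
  proof -
    have "(G (x + t *\<^sub>R d) - G x) \<bullet> d \<le> norm (G (x + t *\<^sub>R d) - G x) * norm d"
      by (rule norm_cauchy_schwarz)
    also have "\<dots> \<le> (L * norm (t *\<^sub>R d)) * norm d"
      using lip[of "x + t *\<^sub>R d" x] by (intro mult_right_mono) auto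
    also have "\<dots> = L * t * (norm d)\<^sup>2" using that by (simp add: power2_eq_square)
    finally show ?thesis .
  qed
  have "\<phi> 0 \<le> \<phi> 1"
  proof (rule DERIV_nonneg_imp_nondecreasing[of 0 1], simp)
    fix t :: real assume t: "0 \<le> t" "t \<le> 1"
    have "(\<phi> has_real_derivative G x \<bullet> d + L * t * (norm d)\<^sup>2 - G (x + t *\<^sub>R d) \<bullet> d) (at t)"
      unfolding \<phi>_def by (rule derivative_eq_intros dF refl | simp)+
    moreover have "0 \<le> G x \<bullet> d + L * t * (norm d)\<^sup>2 - G (x + t *\<^sub>R d) \<bullet> d"
      using slope[OF t(1)] by (simp add: inner_diff_left)
    ultimately show "\<exists>y. (\<phi> has_real_derivative y) (at t) \<and> 0 \<le> y" by blast
  qed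
  then show ?thesis by (simp add: \<phi>_def d_def)
qed

lemma inner_matrix_vector_transpose:
  fixes A :: "real^'n^'m"
  shows "x \<bullet> (A *v y) = (transpose A *v x) \<bullet> y"
  by (simp add: dot_lmul_matrix)

lemma norm_matrix_vector_power2:
  fixes A :: "real^'n^'m"
  shows "(norm (A *v v))\<^sup>2 = v \<bullet> ((transpose A ** A) *v v)"
proof -
  have "v \<bullet> ((transpose A ** A) *v v) = v \<bullet> (transpose A *v (A *v v))"
    by (simp only: matrix_vector_mul_assoc)
  also have "\<dots> = (A *v v) \<bullet> (A *v v)"
    by (simp only: inner_matrix_vector_transpose[of v "transpose A"] transpose_transpose)
  finally show ?thesis by (simp add: power2_norm_eq_inner)
qed

lemma symmetric_matrix_min_eigenvalue:
  fixes M :: "real^'n^'n"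
  assumes sym: "transpose M = M"
  shows "\<exists>\<mu>. is_eigenvalue M \<mu> \<and> (\<forall>x. \<mu> * (norm x)\<^sup>2 \<le> x \<bullet> (M *v x))"
proof -
  let ?q = "\<lambda>x::real^'n. x \<bullet> (M *v x)"
  have cont: "continuous_on (sphere 0 1) ?q"
    by (intro continuous_intros linear_continuous_on matrix_vector_mul_bounded_linear)
  have ne: "sphere (0::real^'n) 1 \<noteq> {}"
    by (simp add: sphere_def) (metis norm_sgn vector_choose_size zero_le_one)
  obtain u where u: "norm u = 1" and umin: "\<And>y. norm y = 1 \<Longrightarrow> ?q u \<le> ?q y"
    using continuous_attains_inf[OF compact_sphere ne cont] by auto
  define \<mu> where "\<mu> = ?q u"
  have bnd: "\<mu> * (norm x)\<^sup>2 \<le> ?q x" for x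
  proof (cases "x = 0")
    case False
    have "norm ((1 / norm x) *\<^sub>R x) = 1" using False by simp
    then have "\<mu> \<le> ?q ((1 / norm x) *\<^sub>R x)" using umin \<mu>_def by blast
    also have "\<dots> = ?q x / (norm x)\<^sup>2"
      by (simp add: matrix_vector_mult_scaleR power2_eq_square)
    finally show ?thesis using False by (simp add: field_simps)
  qed simp
  txt \<open>The excess \<open>e\<close> of the quadratic form over \<open>\<mu> \<parallel>x\<parallel>\<^sup>2\<close> is nonnegative and vanishes at \<open>u\<close>,
    so its first variation \<open>b\<close> at \<open>u\<close> vanishes: this is the eigenvector equation.\<close>
  define e where "e x = ?q x - \<mu> * (norm x)\<^sup>2" for x
  define b where "b v = (M *v u - \<mu> *\<^sub>R u) \<bullet> v" for v
  have expand: "e (u + t *\<^sub>R v) = 2 * t * b v + t\<^sup>2 * e v" for t v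
  proof -
    have s: "u \<bullet> (M *v v) = (M *v u) \<bullet> v"
      using inner_matrix_vector_transpose[of u M v] sym by simp
    have eu: "e u = 0" using u by (simp add: e_def \<mu>_def)
    show ?thesis
      unfolding e_def b_def power2_norm_add using eu u
      by (simp add: algebra_simps inner_add_left inner_add_right power2_norm_eq_inner e_def
            power2_eq_square s inner_commute[of v "M *v u"])
  qed
  have "b v = 0" for v
  proof (rule linear_coeff_zero_if_quadratic_nonneg)
    fix t
    show "0 \<le> 2 * t * b v + t\<^sup>2 * e v"
      using bnd[of "u + t *\<^sub>R v"] expand[of t v] by (simp add: e_def)
  qed
  then have "M *v u - \<mu> *\<^sub>R u = 0" unfolding b_def by (metis inner_eq_zero_iff)
  moreover have "u \<noteq> 0" using u by auto
  ultimately have "is_eigenvalue M \<mu>" unfolding is_eigenvalue_def by (metis eq_iff_diff_eq_0)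
  with bnd show ?thesis by blast
qed

lemma symmetric_matrix_max_eigenvalue:
  fixes M :: "real^'n^'n"
  assumes sym: "transpose M = M"
  shows "\<exists>\<mu>. is_eigenvalue M \<mu> \<and> (\<forall>x. x \<bullet> (M *v x) \<le> \<mu> * (norm x)\<^sup>2)"
proof -
  have neg: "(- M) *v x = - (M *v x)" for x
    by (simp add: matrix_vector_mult_def vec_eq_iff sum_negf)
  have "transpose (- M) = - M" using sym by (simp add: transpose_def vec_eq_iff)
  then obtain \<mu> where eig: "is_eigenvalue (- M) \<mu>" and bnd: "\<And>x. \<mu> * (norm x)\<^sup>2 \<le> x \<bullet> ((- M) *v x)"
    using symmetric_matrix_min_eigenvalue by blast
  from eig have "is_eigenvalue M (- \<mu>)"
    unfolding is_eigenvalue_def neg by (metis minus_minus scaleR_minus_left)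
  moreover have "x \<bullet> (M *v x) \<le> (- \<mu>) * (norm x)\<^sup>2" for x
    using bnd[of x] by (simp add: neg)
  ultimately show ?thesis by blast
qed

lemma norm_matrix_vector_le_max_eigenvalue:
  fixes A :: "real^'n^'m"
  assumes "\<And>l. is_eigenvalue (transpose A ** A) l \<Longrightarrow> l \<le> LA"
  shows "(norm (A *v v))\<^sup>2 \<le> LA * (norm v)\<^sup>2"
proof -
  obtain \<mu> where "is_eigenvalue (transpose A ** A) \<mu>" "\<forall>x. x \<bullet> ((transpose A ** A) *v x) \<le> \<mu> * (norm x)\<^sup>2"
    using symmetric_matrix_max_eigenvalue[of "transpose A ** A"] by (auto simp: matrix_transpose_mul)
  with assms show ?thesis
    unfolding norm_matrix_vector_power2 by (meson mult_right_mono order_trans zero_le_power2)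
qed

lemma min_eigenvalue_le_norm_matrix_vector:
  fixes B :: "real^'n^'m"
  assumes "\<And>l. is_eigenvalue (transpose B ** B) l \<Longrightarrow> lam \<le> l"
  shows "lam * (norm v)\<^sup>2 \<le> (norm (B *v v))\<^sup>2"
proof -
  obtain \<mu> where "is_eigenvalue (transpose B ** B) \<mu>" "\<forall>x. \<mu> * (norm x)\<^sup>2 \<le> x \<bullet> ((transpose B ** B) *v x)"
    using symmetric_matrix_min_eigenvalue[of "transpose B ** B"] by (auto simp: matrix_transpose_mul)
  with assms show ?thesis
    unfolding norm_matrix_vector_power2 by (meson mult_right_mono order_trans zero_le_power2)
qed

lemma Gram_eigenvalue_pos:
  fixes B :: "real^'n^'m"
  assumes "inj ((*v) B)" and "is_eigenvalue (transpose B ** B) l"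
  shows "0 < l"
proof -
  obtain v where v: "v \<noteq> 0" "(transpose B ** B) *v v = l *\<^sub>R v"
    using assms(2) unfolding is_eigenvalue_def by blast
  have "B *v v \<noteq> 0" using assms(1) v(1) by (metis inj_eq matrix_vector_mult_0_right)
  then have "0 < (norm (B *v v))\<^sup>2" by simp
  also have "\<dots> = l * (norm v)\<^sup>2"
    unfolding norm_matrix_vector_power2 v(2) by (simp add: power2_norm_eq_inner)
  finally show ?thesis using v(1) by (simp add: zero_less_mult_iff)
qed

lemma norm_transpose_matrix_vector_ge:
  fixes B :: "real^'n^'m"
  assumes lam: "0 \<le> lam" "\<And>v. lam * (norm v)\<^sup>2 \<le> (norm (B *v v))\<^sup>2"
  shows "lam * (norm (B *v v))\<^sup>2 \<le> (norm (transpose B *v (B *v v)))\<^sup>2"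
proof (cases "B *v v = 0")
  case False
  let ?b = "(norm (B *v v))\<^sup>2" and ?c = "norm (transpose B *v (B *v v))"
  have "?b = v \<bullet> (transpose B *v (B *v v))"
    by (simp only: norm_matrix_vector_power2 matrix_vector_mul_assoc)
  also have "\<dots> \<le> norm v * ?c" by (rule norm_cauchy_schwarz)
  finally have "?b\<^sup>2 \<le> (norm v)\<^sup>2 * ?c\<^sup>2"
    by (metis power_mono power_mult_distrib zero_le_power2)
  then have "lam * ?b * ?b \<le> (lam * (norm v)\<^sup>2) * ?c\<^sup>2"
    using lam(1) by (simp add: power2_eq_square mult_left_mono mult.assoc)
  also have "\<dots> \<le> ?b * ?c\<^sup>2" using lam(2) by (simp add: mult_right_mono)
  finally show ?thesis using False by (simp add: mult.commute)
qed simp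

lemma aug_lagr_dual_update:
  "aug_lagr g f h A B \<beta> x y (\<gamma> + \<beta> *\<^sub>R (A *v x + B *v y))
     = aug_lagr g f h A B \<beta> x y \<gamma> + \<beta> * (norm (A *v x + B *v y))\<^sup>2"
  unfolding aug_lagr_def by (simp add: inner_add_left power2_norm_eq_inner)

lemma fbar_argmin_descent:
  fixes A :: "real^'p^'n"
  assumes step: "fbar f gx A B \<beta> Lx x0 y0 \<gamma> x1 \<le> fbar f gx A B \<beta> Lx x0 y0 \<gamma> x0"
    and g_upper: "g x1 y0 \<le> g x0 y0 + gx x0 y0 \<bullet> (x1 - x0) + Lg/2 * (norm (x1 - x0))\<^sup>2"
    and A_bound: "(norm (A *v (x1 - x0)))\<^sup>2 \<le> LA * (norm (x1 - x0))\<^sup>2"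
    and "0 \<le> \<beta>"
  shows "aug_lagr g f h A B \<beta> x1 y0 \<gamma>
           \<le> aug_lagr g f h A B \<beta> x0 y0 \<gamma> - (Lx - Lg - \<beta> * LA)/2 * (norm (x1 - x0))\<^sup>2"
proof -
  let ?r = "A *v x0 + B *v y0"
  have res: "(norm (A *v x1 + B *v y0))\<^sup>2 = (norm ?r)\<^sup>2
       + 2 * ((transpose A *v ?r) \<bullet> (x1 - x0)) + (norm (A *v (x1 - x0)))\<^sup>2"
  proof -
    have "A *v x1 + B *v y0 = ?r + A *v (x1 - x0)" by (simp add: matrix_vector_mult_diff_distrib)
    then show ?thesis by (simp only: power2_norm_add inner_matrix_vector_transpose[of ?r A])
  qed
  have step': "f x1 + \<gamma> \<bullet> (A *v x1) + Lx/2 * (norm (x1 - x0))\<^sup>2 + gx x0 y0 \<bullet> (x1 - x0)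
       + \<beta> * ((transpose A *v ?r) \<bullet> (x1 - x0)) \<le> f x0 + \<gamma> \<bullet> (A *v x0)"
    using step unfolding fbar_def by (simp add: inner_add_right inner_commute[of "x1 - x0"])
  have "\<beta>/2 * (norm (A *v (x1 - x0)))\<^sup>2 \<le> \<beta>/2 * (LA * (norm (x1 - x0))\<^sup>2)"
    using A_bound \<open>0 \<le> \<beta>\<close> by (simp add: mult_left_mono)
  then show ?thesis
    using step' g_upper unfolding aug_lagr_def res
    by (simp add: inner_add_right algebra_simps add_divide_distrib diff_divide_distrib)
qed

lemma hbar_add:
  "hbar gy gh A B \<beta> Ly x1 y0 \<gamma> (y1 + d) = hbar gy gh A B \<beta> Ly x1 y0 \<gamma> y1
    + (transpose B *v \<gamma> + Ly *\<^sub>R (y1 - y0) + \<beta> *\<^sub>R (transpose B *v (A *v x1 + B *v y1))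
       + (gy x1 y0 + gh y0)) \<bullet> d
    + Ly/2 * (norm d)\<^sup>2 + \<beta>/2 * (norm (B *v d))\<^sup>2"
proof -
  have e1: "\<gamma> \<bullet> (B *v (y1 + d)) = \<gamma> \<bullet> (B *v y1) + (transpose B *v \<gamma>) \<bullet> d"
    by (simp add: matrix_vector_right_distrib inner_add_right inner_matrix_vector_transpose)
  have e2: "(norm (y1 + d - y0))\<^sup>2 = (norm (y1 - y0))\<^sup>2 + 2 * ((y1 - y0) \<bullet> d) + (norm d)\<^sup>2"
    using power2_norm_add[of "y1 - y0" d] by (simp add: algebra_simps)
  have e3: "(norm (A *v x1 + B *v (y1 + d)))\<^sup>2 = (norm (A *v x1 + B *v y1))\<^sup>2
       + 2 * ((transpose B *v (A *v x1 + B *v y1)) \<bullet> d) + (norm (B *v d))\<^sup>2"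
    using power2_norm_add[of "A *v x1 + B *v y1" "B *v d"]
    by (simp add: matrix_vector_right_distrib inner_matrix_vector_transpose add.assoc)
  have e4: "(y1 + d - y0) \<bullet> (gy x1 y0 + gh y0)
      = (y1 - y0) \<bullet> (gy x1 y0 + gh y0) + (gy x1 y0 + gh y0) \<bullet> d"
    by (simp add: algebra_simps inner_add_left inner_diff_left inner_commute[of d])
  show ?thesis
    unfolding hbar_def e1 e2 e3 e4 by (simp add: inner_add_left algebra_simps)
qed

lemma hbar_argmin_stationary:
  assumes min: "\<And>y. hbar gy gh A B \<beta> Ly x1 y0 \<gamma> y1 \<le> hbar gy gh A B \<beta> Ly x1 y0 \<gamma> y"
  shows "transpose B *v \<gamma> + Ly *\<^sub>R (y1 - y0) + \<beta> *\<^sub>R (transpose B *v (A *v x1 + B *v y1))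
           + (gy x1 y0 + gh y0) = 0"
    (is "?G = 0")
proof -
  have "(norm ?G)\<^sup>2 / 2 = 0"
  proof (rule linear_coeff_zero_if_quadratic_nonneg)
    fix t :: real
    have "(norm (t *\<^sub>R ?G))\<^sup>2 = t\<^sup>2 * (norm ?G)\<^sup>2" "(norm (B *v (t *\<^sub>R ?G)))\<^sup>2 = t\<^sup>2 * (norm (B *v ?G))\<^sup>2"
      by (simp_all only: matrix_vector_mult_scaleR norm_scaleR power_mult_distrib power2_abs)
    moreover have "?G \<bullet> (t *\<^sub>R ?G) = t * (norm ?G)\<^sup>2" by (simp add: power2_norm_eq_inner)
    ultimately show "0 \<le> 2 * t * ((norm ?G)\<^sup>2 / 2) + t\<^sup>2 * (Ly/2 * (norm ?G)\<^sup>2 + \<beta>/2 * (norm (B *v ?G))\<^sup>2)"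
      using min[of "y1 + t *\<^sub>R ?G"] unfolding hbar_add by (simp add: algebra_simps)
  qed
  then show ?thesis by simp
qed

lemma hbar_argmin_growth:
  assumes min: "\<And>y. hbar gy gh A B \<beta> Ly x1 y0 \<gamma> y1 \<le> hbar gy gh A B \<beta> Ly x1 y0 \<gamma> y"
    and "0 \<le> \<beta>"
  shows "hbar gy gh A B \<beta> Ly x1 y0 \<gamma> y1 + Ly/2 * (norm (y1 - y0))\<^sup>2 \<le> hbar gy gh A B \<beta> Ly x1 y0 \<gamma> y0"
proof -
  have "hbar gy gh A B \<beta> Ly x1 y0 \<gamma> y0 = hbar gy gh A B \<beta> Ly x1 y0 \<gamma> (y1 + (y0 - y1))" by simp
  also have "\<dots> = hbar gy gh A B \<beta> Ly x1 y0 \<gamma> y1 + Ly/2 * (norm (y1 - y0))\<^sup>2 + \<beta>/2 * (norm (B *v (y0 - y1)))\<^sup>2"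
    unfolding hbar_add hbar_argmin_stationary[OF min] by (simp add: norm_minus_commute)
  finally show ?thesis using \<open>0 \<le> \<beta>\<close> by simp
qed

lemma hbar_growth_imp_descent:
  assumes growth: "hbar gy gh A B \<beta> Ly x1 y0 \<gamma> y1 + Ly/2 * (norm (y1 - y0))\<^sup>2
                      \<le> hbar gy gh A B \<beta> Ly x1 y0 \<gamma> y0"
    and gh_upper: "g x1 y1 + h y1
                     \<le> g x1 y0 + h y0 + (gy x1 y0 + gh y0) \<bullet> (y1 - y0) + Lw/2 * (norm (y1 - y0))\<^sup>2"
  shows "aug_lagr g f h A B \<beta> x1 y1 \<gamma>
           \<le> aug_lagr g f h A B \<beta> x1 y0 \<gamma> - (2 * Ly - Lw)/2 * (norm (y1 - y0))\<^sup>2"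
proof -
  have split: "(2 * Ly - Lw)/2 * (norm (y1 - y0))\<^sup>2 = Ly * (norm (y1 - y0))\<^sup>2 - Lw/2 * (norm (y1 - y0))\<^sup>2"
    by (simp add: field_simps)
  show ?thesis
    using growth gh_upper unfolding aug_lagr_def hbar_def split inner_commute[of "y1 - y0"]
    by (simp add: inner_add_right)
qed

lemma penalty_quadratic_nonneg:
  fixes Lw Ly \<kappa> \<nu> \<delta> :: real
  assumes "0 < Ly" "Lw + Ly + 2 \<le> \<kappa>"
  shows "(Lw + Ly) * \<delta> * \<nu> \<le> (\<kappa> - Lw)/2 * \<nu>\<^sup>2 + (Ly + Lw\<^sup>2)/2 * \<delta>\<^sup>2"
proof -
  have "(Ly + 2) * (Ly + Lw\<^sup>2) - (Lw + Ly)\<^sup>2 = Ly * ((Lw - 1)\<^sup>2 + 1) + Lw\<^sup>2"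
    by (simp add: power2_eq_square algebra_simps)
  then have "(Lw + Ly)\<^sup>2 \<le> (Ly + 2) * (Ly + Lw\<^sup>2)"
    using \<open>0 < Ly\<close> by (smt (verit) mult_pos_pos zero_le_power2)
  then have "0 \<le> (Ly + 2) * \<nu>\<^sup>2 - 2 * (Lw + Ly) * \<delta> * \<nu> + (Ly + Lw\<^sup>2) * \<delta>\<^sup>2"
    using \<open>0 < Ly\<close> by (intro binary_quadratic_nonneg) auto
  moreover have "(Ly + 2) * \<nu>\<^sup>2 \<le> (\<kappa> - Lw) * \<nu>\<^sup>2"
    using assms(2) by (intro mult_right_mono) auto
  ultimately show ?thesis by (simp add: field_simps)
qed

locale linearized_admm =
  fixes g :: "real^'p \<Rightarrow> real^'q \<Rightarrow> real"
    and f :: "real^'p \<Rightarrow> real"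
    and h :: "real^'q \<Rightarrow> real"
    and gx :: "real^'p \<Rightarrow> real^'q \<Rightarrow> real^'p"
    and gy :: "real^'p \<Rightarrow> real^'q \<Rightarrow> real^'q"
    and gh :: "real^'q \<Rightarrow> real^'q"
    and A :: "real^'p^'n" and B :: "real^'q^'n"
    and Lg Lh Lx Ly \<beta> LA lamB :: real
    and X :: "nat \<Rightarrow> real^'p" and Y :: "nat \<Rightarrow> real^'q" and \<Gamma> :: "nat \<Rightarrow> real^'n"
  assumes grad_h: "\<And>y. (h has_derivative (\<lambda>d. gh y \<bullet> d)) (at y)"
    and lip_h: "\<And>y y'. norm (gh y - gh y') \<le> Lh * norm (y - y')"
    and grad_g: "\<And>x y. ((\<lambda>z. g (fst z) (snd z)) has_derivative
                     (\<lambda>d. gx x y \<bullet> fst d + gy x y \<bullet> snd d)) (at (x, y))"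
    and lip_g: "\<And>x y x' y'. norm ((gx x y, gy x y) - (gx x' y', gy x' y'))
                              \<le> Lg * norm ((x, y) - (x', y'))"
    and lower_bdd: "\<exists>c. \<forall>x y. A *v x + B *v y = 0 \<longrightarrow> c \<le> g x y + f x + h y"
    and im_AB: "range ((*v) A) \<subseteq> range ((*v) B)"
    and beta_pos: "0 < \<beta>"
    and A_bound: "\<And>v. (norm (A *v v))\<^sup>2 \<le> LA * (norm v)\<^sup>2"
    and B_bound: "\<And>v. lamB * (norm v)\<^sup>2 \<le> (norm (B *v v))\<^sup>2"
    and x_step: "\<And>k x. fbar f gx A B \<beta> Lx (X k) (Y k) (\<Gamma> k) (X (Suc k))
                        \<le> fbar f gx A B \<beta> Lx (X k) (Y k) (\<Gamma> k) x"
    and y_step: "\<And>k y. hbar gy gh A B \<beta> Ly (X (Suc k)) (Y k) (\<Gamma> k) (Y (Suc k))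
                        \<le> hbar gy gh A B \<beta> Ly (X (Suc k)) (Y k) (\<Gamma> k) y"
    and dual_step: "\<And>k. \<Gamma> (Suc k) = \<Gamma> k + \<beta> *\<^sub>R (A *v X (Suc k) + B *v Y (Suc k))"
    and Lx_bound: "Lg + \<beta> * LA + 6 * (Lg + Lh)\<^sup>2 + 1 \<le> Lx"
    and Ly_bound: "(Lg + Lh) + (Lg + Lh)\<^sup>2 + 3 \<le> Ly"
    and beta_lamB_bounds:
      "(Lg + Lh) + Ly + 2 \<le> \<beta> * lamB"
      "3 * ((Lg + Lh)\<^sup>2 + Ly\<^sup>2) \<le> \<beta> * lamB * ((Ly + (Lg + Lh)\<^sup>2) / 2)"
      "3 * Ly\<^sup>2 \<le> \<beta> * lamB"
begin

abbreviation Lw :: real where "Lw \<equiv> Lg + Lh"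

abbreviation Cm :: real where "Cm \<equiv> (Ly + Lw\<^sup>2) / 2"

text \<open>\<open>merit k\<close> is the paper's \<open>m\<^sub>k\<^sub>+\<^sub>1\<close>.\<close>
definition merit :: "nat \<Rightarrow> real" where
  "merit k = aug_lagr g f h A B \<beta> (X (Suc k)) (Y (Suc k)) (\<Gamma> (Suc k))
               + Cm * (norm (Y (Suc k) - Y k))\<^sup>2"

lemma Lh_nonneg: "0 \<le> Lh"
proof -
  have "0 \<le> norm (gh (vec 1) - gh 0)" by simp
  also have "\<dots> \<le> Lh * norm (vec 1 - (0::real^'q))" by (rule lip_h)
  finally show ?thesis by (simp add: zero_le_mult_iff vec_eq_iff)
qed

lemma Lg_nonneg: "0 \<le> Lg"
proof -
  have "0 \<le> norm ((gx 0 (vec 1), gy 0 (vec 1)) - (gx 0 0, gy 0 (0::real^'q)))" by simp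
  also have "\<dots> \<le> Lg * norm ((0::real^'p, vec 1) - (0, 0::real^'q))" by (rule lip_g)
  finally show ?thesis by (simp add: zero_le_mult_iff vec_eq_iff)
qed

lemma Lw_nonneg: "0 \<le> Lw"
  using Lg_nonneg Lh_nonneg by simp

lemma Ly_pos: "0 < Ly"
  using Ly_bound Lw_nonneg by (smt (verit) zero_le_power2)

lemma lamB_pos: "0 < lamB"
  using beta_lamB_bounds(1) Lw_nonneg Ly_pos beta_pos by (smt (verit) zero_less_mult_iff)

lemma g_upper:
  "g x' y' \<le> g x y + gx x y \<bullet> (x' - x) + gy x y \<bullet> (y' - y)
               + Lg/2 * ((norm (x' - x))\<^sup>2 + (norm (y' - y))\<^sup>2)"
proof -
  let ?G = "\<lambda>z. (gx (fst z) (snd z), gy (fst z) (snd z))"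
  have "((\<lambda>z. g (fst z) (snd z)) has_derivative (\<lambda>d. ?G z \<bullet> d)) (at z)" for z
    using grad_g[of "fst z" "snd z"] by (simp add: inner_prod_def)
  moreover have "norm (?G z - ?G w) \<le> Lg * norm (z - w)" for z w
    using lip_g[of "fst z" "snd z" "fst w" "snd w"] by simp
  ultimately have "g x' y' \<le> g x y + ?G (x, y) \<bullet> ((x', y') - (x, y)) + Lg/2 * (norm ((x', y') - (x, y)))\<^sup>2"
    using lipschitz_gradient_upper_bound[where x="(x, y)" and y="(x', y')"] by fastforce
  then show ?thesis by (simp add: norm_Pair)
qed

lemma gh_upper:
  "g x y1 + h y1 \<le> g x y0 + h y0 + (gy x y0 + gh y0) \<bullet> (y1 - y0) + Lw/2 * (norm (y1 - y0))\<^sup>2"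
  using g_upper[of x y1 x y0] lipschitz_gradient_upper_bound[OF grad_h lip_h, where x=y0 and y=y1]
  by (simp add: inner_add_left algebra_simps add_divide_distrib)

lemma gradient_y_lipschitz:
  "norm ((gy x y + gh y) - (gy x' y' + gh y')) \<le> Lw * norm (x - x', y - y')"
proof -
  have "norm (gy x y - gy x' y') \<le> norm ((gx x y, gy x y) - (gx x' y', gy x' y'))"
    using norm_snd_le[of "gy x y - gy x' y'" "gx x y - gx x' y'"] by simp
  also have "\<dots> \<le> Lg * norm (x - x', y - y')" using lip_g by simp
  finally have "norm (gy x y - gy x' y') \<le> Lg * norm (x - x', y - y')" .
  moreover have "norm (gh y - gh y') \<le> Lh * norm (x - x', y - y')"
    using lip_h[of y y'] mult_left_mono[OF norm_snd_le[of "y - y'" "x - x'"] Lh_nonneg] by linarith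
  moreover have "norm ((gy x y + gh y) - (gy x' y' + gh y'))
                   \<le> norm (gy x y - gy x' y') + norm (gh y - gh y')"
    by (metis add_diff_add norm_triangle_ineq)
  ultimately show ?thesis by (simp add: algebra_simps)
qed

lemma x_update_descent:
  "aug_lagr g f h A B \<beta> (X (Suc k)) (Y k) (\<Gamma> k)
     \<le> aug_lagr g f h A B \<beta> (X k) (Y k) (\<Gamma> k) - (Lx - Lg - \<beta> * LA)/2 * (norm (X (Suc k) - X k))\<^sup>2"
  by (rule fbar_argmin_descent[OF x_step _ A_bound less_imp_le[OF beta_pos]])
     (use g_upper[of "X (Suc k)" "Y k" "X k" "Y k"] in simp)

lemma y_update_descent:
  "aug_lagr g f h A B \<beta> (X (Suc k)) (Y (Suc k)) (\<Gamma> k)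
     \<le> aug_lagr g f h A B \<beta> (X (Suc k)) (Y k) (\<Gamma> k) - (2 * Ly - Lw)/2 * (norm (Y (Suc k) - Y k))\<^sup>2"
  by (rule hbar_growth_imp_descent[OF hbar_argmin_growth[OF y_step less_imp_le[OF beta_pos]]])
     (rule gh_upper)

lemma transpose_B_multiplier:
  "transpose B *v \<Gamma> (Suc k) = - (Ly *\<^sub>R (Y (Suc k) - Y k) + (gy (X (Suc k)) (Y k) + gh (Y k)))"
proof -
  have "transpose B *v \<Gamma> (Suc k)
          = transpose B *v \<Gamma> k + \<beta> *\<^sub>R (transpose B *v (A *v X (Suc k) + B *v Y (Suc k)))"
    by (simp only: dual_step matrix_vector_right_distrib matrix_vector_mult_scaleR)
  with hbar_argmin_stationary[OF y_step] show ?thesis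
    by (simp add: eq_neg_iff_add_eq_0 algebra_simps)
qed

lemma dual_increment_bound:
  "lamB * (norm (\<Gamma> (Suc (Suc k)) - \<Gamma> (Suc k)))\<^sup>2
     \<le> 3 * Ly\<^sup>2 * (norm (Y (Suc (Suc k)) - Y (Suc k)))\<^sup>2
       + 3 * (Lw\<^sup>2 + Ly\<^sup>2) * (norm (Y (Suc k) - Y k))\<^sup>2
       + 3 * Lw\<^sup>2 * (norm (X (Suc (Suc k)) - X (Suc k)))\<^sup>2"
proof -
  define dy2 dy1 dx2 where "dy2 = Y (Suc (Suc k)) - Y (Suc k)" and "dy1 = Y (Suc k) - Y k"
    and "dx2 = X (Suc (Suc k)) - X (Suc k)"
  define dc where "dc = (gy (X (Suc (Suc k))) (Y (Suc k)) + gh (Y (Suc k))) - (gy (X (Suc k)) (Y k) + gh (Y k))"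
  let ?w = "\<Gamma> (Suc (Suc k)) - \<Gamma> (Suc k)"
  obtain z where "A *v X (Suc (Suc k)) = B *v z" using im_AB by blast
  then have "?w = B *v (\<beta> *\<^sub>R (z + Y (Suc (Suc k))))"
    by (simp add: dual_step matrix_vector_right_distrib matrix_vector_mult_scaleR)
  then have "lamB * (norm ?w)\<^sup>2 \<le> (norm (transpose B *v ?w))\<^sup>2"
    using norm_transpose_matrix_vector_ge[OF less_imp_le[OF lamB_pos] B_bound] by simp
  also have "transpose B *v ?w = (- (Ly *\<^sub>R dy2)) + Ly *\<^sub>R dy1 + (- dc)"
    unfolding matrix_vector_mult_diff_distrib transpose_B_multiplier dy2_def dy1_def dc_def
    by (simp add: algebra_simps)
  also have "(norm \<dots>)\<^sup>2 \<le> 3 * (Ly\<^sup>2 * (norm dy2)\<^sup>2 + Ly\<^sup>2 * (norm dy1)\<^sup>2 + (norm dc)\<^sup>2)"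
    using norm_add3_power2_le[of "- (Ly *\<^sub>R dy2)" "Ly *\<^sub>R dy1" "- dc"]
    by (simp only: norm_minus_cancel norm_scaleR power_mult_distrib power2_abs)
  also have "(norm dc)\<^sup>2 \<le> Lw\<^sup>2 * ((norm dx2)\<^sup>2 + (norm dy1)\<^sup>2)"
  proof -
    have "norm dc \<le> Lw * norm (dx2, dy1)"
      unfolding dc_def dx2_def dy1_def by (rule gradient_y_lipschitz)
    then have "(norm dc)\<^sup>2 \<le> (Lw * norm (dx2, dy1))\<^sup>2" by (simp add: power_mono)
    then show ?thesis by (simp add: power_mult_distrib norm_Pair)
  qed
  finally show ?thesis unfolding dy2_def dy1_def dx2_def by (simp add: algebra_simps)
qed

lemma residual_bound:
  "\<beta> * (norm (A *v X (Suc (Suc k)) + B *v Y (Suc (Suc k))))\<^sup>2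
     \<le> (norm (Y (Suc (Suc k)) - Y (Suc k)))\<^sup>2 + Cm * (norm (Y (Suc k) - Y k))\<^sup>2
       + 3 * Lw\<^sup>2 * (norm (X (Suc (Suc k)) - X (Suc k)))\<^sup>2"
proof -
  define a2 a1 x2 where "a2 = (norm (Y (Suc (Suc k)) - Y (Suc k)))\<^sup>2"
    and "a1 = (norm (Y (Suc k) - Y k))\<^sup>2" and "x2 = (norm (X (Suc (Suc k)) - X (Suc k)))\<^sup>2"
  define \<kappa> where "\<kappa> = \<beta> * lamB"
  have "\<kappa> * (\<beta> * (norm (A *v X (Suc (Suc k)) + B *v Y (Suc (Suc k))))\<^sup>2)
          = lamB * (norm (\<Gamma> (Suc (Suc k)) - \<Gamma> (Suc k)))\<^sup>2"
    by (simp add: \<kappa>_def dual_step power_mult_distrib power2_eq_square)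
  also have "\<dots> \<le> 3 * Ly\<^sup>2 * a2 + 3 * (Lw\<^sup>2 + Ly\<^sup>2) * a1 + 3 * Lw\<^sup>2 * x2"
    unfolding a2_def a1_def x2_def by (rule dual_increment_bound)
  also have "\<dots> \<le> \<kappa> * (a2 + Cm * a1 + 3 * Lw\<^sup>2 * x2)"
  proof -
    have "1 \<le> \<kappa>" using beta_lamB_bounds(1) Lw_nonneg Ly_pos by (simp add: \<kappa>_def)
    then have "3 * Lw\<^sup>2 * x2 \<le> \<kappa> * (3 * Lw\<^sup>2 * x2)"
      using mult_right_mono[of 1 \<kappa> "3 * Lw\<^sup>2 * x2"] unfolding x2_def by simp
    moreover have "3 * Ly\<^sup>2 * a2 \<le> \<kappa> * a2"
      using beta_lamB_bounds(3) unfolding \<kappa>_def a2_def by (intro mult_right_mono) simp_all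
    moreover have "3 * (Lw\<^sup>2 + Ly\<^sup>2) * a1 \<le> \<kappa> * Cm * a1"
      using beta_lamB_bounds(2) unfolding \<kappa>_def a1_def by (intro mult_right_mono) simp_all
    then have "3 * (Lw\<^sup>2 + Ly\<^sup>2) * a1 \<le> \<kappa> * (Cm * a1)"
      by (simp only: mult.assoc)
    ultimately show ?thesis unfolding distrib_left by linarith
  qed
  finally show ?thesis
    using beta_lamB_bounds(1) Lw_nonneg Ly_pos unfolding a2_def a1_def x2_def \<kappa>_def
    by (smt (verit) mult_le_cancel_left_pos)
qed

lemma merit_decreasing: "merit (Suc k) \<le> merit k"
proof -
  define a2 a1 x2 where "a2 = (norm (Y (Suc (Suc k)) - Y (Suc k)))\<^sup>2"
    and "a1 = (norm (Y (Suc k) - Y k))\<^sup>2" and "x2 = (norm (X (Suc (Suc k)) - X (Suc k)))\<^sup>2"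
  have "merit (Suc k) = aug_lagr g f h A B \<beta> (X (Suc (Suc k))) (Y (Suc (Suc k))) (\<Gamma> (Suc k))
          + \<beta> * (norm (A *v X (Suc (Suc k)) + B *v Y (Suc (Suc k))))\<^sup>2 + Cm * a2"
    unfolding merit_def a2_def dual_step[of "Suc k"] aug_lagr_dual_update ..
  moreover have "merit k = aug_lagr g f h A B \<beta> (X (Suc k)) (Y (Suc k)) (\<Gamma> (Suc k)) + Cm * a1"
    unfolding merit_def a1_def ..
  moreover have "3 * Lw\<^sup>2 * x2 \<le> (Lx - Lg - \<beta> * LA)/2 * x2"
    using Lx_bound by (intro mult_right_mono) (auto simp: x2_def)
  moreover have "a2 + Cm * a2 \<le> (2 * Ly - Lw)/2 * a2"
    using Ly_bound mult_right_mono[of "1 + Cm" "(2 * Ly - Lw)/2" a2]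
    by (simp add: a2_def field_simps)
  ultimately show ?thesis
    using x_update_descent[of "Suc k", folded x2_def] y_update_descent[of "Suc k", folded a2_def]
      residual_bound[of k, folded a2_def a1_def x2_def]
    by linarith
qed

lemma multiplier_pairing_lower_bound:
  "- ((Lw + Ly) * norm (Y (Suc k) - Y k) * norm u)
     \<le> \<Gamma> (Suc k) \<bullet> (B *v u) + (gy (X (Suc k)) (Y (Suc k)) + gh (Y (Suc k))) \<bullet> u"
proof -
  define v where "v = (gy (X (Suc k)) (Y (Suc k)) + gh (Y (Suc k))) - (gy (X (Suc k)) (Y k) + gh (Y k))
                        - Ly *\<^sub>R (Y (Suc k) - Y k)"
  have "\<Gamma> (Suc k) \<bullet> (B *v u) + (gy (X (Suc k)) (Y (Suc k)) + gh (Y (Suc k))) \<bullet> u = v \<bullet> u"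
    unfolding inner_matrix_vector_transpose transpose_B_multiplier v_def
    by (simp add: inner_diff_left inner_add_left)
  moreover have "norm v \<le> (Lw + Ly) * norm (Y (Suc k) - Y k)"
  proof -
    have "norm v \<le> Lw * norm (X (Suc k) - X (Suc k), Y (Suc k) - Y k) + norm (Ly *\<^sub>R (Y (Suc k) - Y k))"
      unfolding v_def by (rule order_trans[OF norm_triangle_ineq4 add_right_mono[OF gradient_y_lipschitz]])
    moreover have "norm (X (Suc k) - X (Suc k), Y (Suc k) - Y k) = norm (Y (Suc k) - Y k)"
      by (simp add: norm_Pair)
    moreover have "norm (Ly *\<^sub>R (Y (Suc k) - Y k)) = Ly * norm (Y (Suc k) - Y k)"
      using Ly_pos by simp
    ultimately show ?thesis by (simp only: distrib_right)
  qed
  then have "- (v \<bullet> u) \<le> (Lw + Ly) * norm (Y (Suc k) - Y k) * norm u"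
    by (smt (verit) mult_right_mono norm_cauchy_schwarz norm_ge_zero norm_minus_cancel inner_minus_left)
  ultimately show ?thesis by simp
qed

lemma merit_bounded_below: "\<exists>c. \<forall>k. c \<le> merit k"
proof -
  obtain c where c: "\<And>x y. A *v x + B *v y = 0 \<Longrightarrow> c \<le> g x y + f x + h y"
    using lower_bdd by blast
  have "c \<le> merit k" for k
  proof -
    define x y where "x = X (Suc k)" and "y = Y (Suc k)"
    obtain z where z: "A *v x = B *v z" using im_AB by blast
    define u where "u = y + z"
    define \<nu> \<delta> where "\<nu> = norm u" and "\<delta> = norm (Y (Suc k) - Y k)"
    have res: "A *v x + B *v y = B *v u"
      using z by (simp add: u_def matrix_vector_right_distrib add.commute)
    have shift: "- z - y = - u" by (simp add: u_def)
    txt \<open>The bound comes from comparing with the feasible point \<open>(x, -z)\<close>.\<close>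
    have "c \<le> g x (- z) + f x + h (- z)"
      by (rule c) (simp add: z linear_neg[OF matrix_vector_mul_linear])
    moreover have "g x (- z) + h (- z) \<le> g x y + h y - (gy x y + gh y) \<bullet> u + Lw/2 * \<nu>\<^sup>2"
      using gh_upper[of x "- z" y] unfolding shift by (simp add: \<nu>_def)
    moreover have "- ((Lw + Ly) * \<delta> * \<nu>) \<le> \<Gamma> (Suc k) \<bullet> (B *v u) + (gy x y + gh y) \<bullet> u"
      unfolding x_def y_def \<delta>_def \<nu>_def by (rule multiplier_pairing_lower_bound)
    moreover have "(Lw + Ly) * \<delta> * \<nu> \<le> (\<beta> * lamB - Lw)/2 * \<nu>\<^sup>2 + Cm * \<delta>\<^sup>2"
      by (rule penalty_quadratic_nonneg[OF Ly_pos beta_lamB_bounds(1)])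
    moreover have "\<beta> * lamB / 2 * \<nu>\<^sup>2 \<le> \<beta>/2 * (norm (B *v u))\<^sup>2"
      using mult_left_mono[OF B_bound[of u], of "\<beta>/2"] beta_pos by (simp add: \<nu>_def)
    moreover have "merit k = g x y + f x + h y + \<Gamma> (Suc k) \<bullet> (B *v u)
                               + \<beta>/2 * (norm (B *v u))\<^sup>2 + Cm * \<delta>\<^sup>2"
      unfolding merit_def aug_lagr_def x_def[symmetric] y_def[symmetric] res \<delta>_def ..
    ultimately show ?thesis by (simp add: field_simps)
  qed
  then show ?thesis by blast
qed

lemma merit_convergent: "convergent merit"
proof -
  obtain c where "\<forall>k. c \<le> merit k" using merit_bounded_below by blast
  moreover have "decseq merit" by (rule decseq_SucI) (rule merit_decreasing)
  ultimately obtain L where "merit \<longlonglongrightarrow> L" using decseq_convergent by blast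
  then show ?thesis by (auto simp: convergent_def)
qed

end

theorem lemma8:
  fixes g :: "real^'p \<Rightarrow> real^'q \<Rightarrow> real"
    and f :: "real^'p \<Rightarrow> real"
    and h :: "real^'q \<Rightarrow> real"
    and gx :: "real^'p \<Rightarrow> real^'q \<Rightarrow> real^'p"
    and gy :: "real^'p \<Rightarrow> real^'q \<Rightarrow> real^'q"
    and gh :: "real^'q \<Rightarrow> real^'q"
    and A :: "real^'p^'n" and B :: "real^'q^'n"
    and Lg Lh Lx Ly \<beta> LA lamB :: real
    and X :: "nat \<Rightarrow> real^'p" and Y :: "nat \<Rightarrow> real^'q" and \<Gamma> :: "nat \<Rightarrow> real^'n"
  assumes grad_h: "\<And>y. (h has_derivative (\<lambda>d. gh y \<bullet> d)) (at y)"
    and lip_h: "\<And>y y'. norm (gh y - gh y') \<le> Lh * norm (y - y')"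
    and grad_g: "\<And>x y. ((\<lambda>z. g (fst z) (snd z)) has_derivative
                     (\<lambda>d. gx x y \<bullet> fst d + gy x y \<bullet> snd d)) (at (x, y))"
    and lip_g: "\<And>x y x' y'. norm ((gx x y, gy x y) - (gx x' y', gy x' y'))
                              \<le> Lg * norm ((x, y) - (x', y'))"
    and lower_bdd: "\<exists>c. \<forall>x y. A *v x + B *v y = 0 \<longrightarrow> c \<le> g x y + f x + h y"
    and coercive: "\<And>XS YS. (\<forall>k. A *v XS k + B *v YS k = 0) \<Longrightarrow>
                     filterlim (\<lambda>k. norm (YS k)) at_top sequentially \<Longrightarrow>
                     filterlim (\<lambda>k. g (XS k) (YS k) + f (XS k) + h (YS k)) at_top sequentially"
    and B_full_rank: "inj ((*v) B)"
    and im_AB: "range ((*v) A) \<subseteq> range ((*v) B)"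
    and pos: "Lx > 0" "Ly > 0" "\<beta> > 0"
    and LA_char: "is_eigenvalue (transpose A ** A) LA"
                "\<And>l. is_eigenvalue (transpose A ** A) l \<Longrightarrow> l \<le> LA"
    and lamB_char: "is_eigenvalue (transpose B ** B) lamB"
                "\<And>l. is_eigenvalue (transpose B ** B) l \<Longrightarrow> lamB \<le> l"
    and x_step: "\<And>k x. fbar f gx A B \<beta> Lx (X k) (Y k) (\<Gamma> k) (X (Suc k))
                        \<le> fbar f gx A B \<beta> Lx (X k) (Y k) (\<Gamma> k) x"
    and y_step: "\<And>k y. hbar gy gh A B \<beta> Ly (X (Suc k)) (Y k) (\<Gamma> k) (Y (Suc k))
                        \<le> hbar gy gh A B \<beta> Ly (X (Suc k)) (Y k) (\<Gamma> k) y"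
    and dual_step: "\<And>k. \<Gamma> (Suc k) = \<Gamma> k + \<beta> *\<^sub>R (A *v X (Suc k) + B *v Y (Suc k))"
    and Lx_bd: "Lx \<ge> Lg + \<beta> * LA + 6 * (Lg + Lh)\<^sup>2 + 1"
    and Ly_bd: "Ly \<ge> (Lg + Lh) + (Lg + Lh)\<^sup>2 + 3"
    and beta_bd: "\<beta> \<ge> Max {((Lg + Lh) + Ly + 2) / lamB,
                        3 * ((Lg + Lh)\<^sup>2 + Ly\<^sup>2) / (lamB * ((Ly + (Lg + Lh)\<^sup>2) / 2)),
                        3 * Ly\<^sup>2 / lamB}"
  shows "convergent (\<lambda>k. aug_lagr g f h A B \<beta> (X (Suc k)) (Y (Suc k)) (\<Gamma> (Suc k))
                 + (Ly + (Lg + Lh)\<^sup>2) / 2 * (norm (Y (Suc k) - Y k))\<^sup>2)"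
proof -
  have "0 < lamB" by (rule Gram_eigenvalue_pos[OF B_full_rank lamB_char(1)])
  moreover have "0 < Ly + (Lg + Lh)\<^sup>2"
  proof -
    have "0 \<le> (Lg + Lh + 1/2)\<^sup>2" "0 \<le> (Lg + Lh)\<^sup>2" by simp_all
    then show ?thesis using Ly_bd by (simp add: power2_eq_square algebra_simps)
  qed
  moreover have "((Lg + Lh) + Ly + 2) / lamB \<le> \<beta>"
    "3 * ((Lg + Lh)\<^sup>2 + Ly\<^sup>2) / (lamB * ((Ly + (Lg + Lh)\<^sup>2) / 2)) \<le> \<beta>"
    "3 * Ly\<^sup>2 / lamB \<le> \<beta>"
    using beta_bd by auto
  ultimately have "(Lg + Lh) + Ly + 2 \<le> \<beta> * lamB"
    "3 * ((Lg + Lh)\<^sup>2 + Ly\<^sup>2) \<le> \<beta> * lamB * ((Ly + (Lg + Lh)\<^sup>2) / 2)"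
    "3 * Ly\<^sup>2 \<le> \<beta> * lamB"
    by (simp_all add: pos_divide_le_eq mult.commute mult.left_commute)
  moreover have "(norm (A *v v))\<^sup>2 \<le> LA * (norm v)\<^sup>2" for v
    by (rule norm_matrix_vector_le_max_eigenvalue[OF LA_char(2)])
  moreover have "lamB * (norm v)\<^sup>2 \<le> (norm (B *v v))\<^sup>2" for v
    by (rule min_eigenvalue_le_norm_matrix_vector[OF lamB_char(2)])
  ultimately interpret linearized_admm g f h gx gy gh A B Lg Lh Lx Ly \<beta> LA lamB X Y \<Gamma>
    using assms by unfold_locales auto
  show ?thesis using merit_convergent unfolding merit_def .
qed

end
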